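(* $16\rightarrow 167\rightrightarrows 19$: there is an injective isotone map $\varphi:\mathbf 2^4\to F_4^-$ such that $\{\varphi(x)[p_1:=e]: x\in\mathbf 2^4,\ e\in\{0,1\}\}\supseteq F_3^-$.
   Context: $F_k$ is the set of monotone Boolean functions of $k$ variables $p_1,\dots,p_k$ (including constants $0,1$), ordered pointwise; $F_k^-=F_k\setminus\{0\}$. For $g\in F_k$ and $e\in\{0,1\}$, $g[p_1:=e]$ is the function of $p_2,\dots,p_k$ (identified with $F_{k-1}$) obtained by substituting $e$ for $p_1$. $\mathbf 2^i$ is $\{0,1\}^i$ with the coordinatewise order; isotone means order-preserving. Notation: $2^i\rightarrow|F_j^-|\rightrightarrows|F_{j-1}^-|$ means there is an injective isotone map $\varphi:\mathbf 2^i\to F_j^-$ such that every element of $F_{j-1}^-$ equals $\varphi(x)[p_1:=e]$ for some $x\in\mathbf 2^i$, $e\in\{0,1\}$. Here $|F_3^-|=19$, $|F_4^-|=167$. *)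

theory Defs
  imports Main
begin

text \<open>Assignments to the variables p_1,...,p_k are Boolean lists of length k
  (the head is the value of p_1). The cube 2^i is the set of Boolean lists of
  length i ordered coordinatewise.\<close>

definition cube :: "nat \<Rightarrow> bool list set" where
  "cube i = {xs. length xs = i}"

definition cube_le :: "bool list \<Rightarrow> bool list \<Rightarrow> bool" where
  "cube_le xs ys = list_all2 (\<le>) xs ys"

text \<open>A Boolean function of k variables is a function on bool lists that is
  False outside length k (normal form, so that equality is extensional
  equality on length-k assignments and the order is the pointwise order).\<close>

definition monotone_bool_fun :: "nat \<Rightarrow> (bool list \<Rightarrow> bool) \<Rightarrow> bool" where
  "monotone_bool_fun k f \<longleftrightarrow>
     (\<forall>xs. length xs \<noteq> k \<longrightarrow> \<not> f xs) \<and>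
     (\<forall>xs ys. length xs = k \<longrightarrow> length ys = k \<longrightarrow> cube_le xs ys \<longrightarrow> f xs \<longrightarrow> f ys)"

definition F :: "nat \<Rightarrow> (bool list \<Rightarrow> bool) set" where
  "F k = {f. monotone_bool_fun k f}"

definition Fminus :: "nat \<Rightarrow> (bool list \<Rightarrow> bool) set" where
  "Fminus k = F k - {(\<lambda>_. False)}"

definition subst1 :: "(bool list \<Rightarrow> bool) \<Rightarrow> bool \<Rightarrow> (bool list \<Rightarrow> bool)" where
  "subst1 g e = (\<lambda>xs. g (e # xs))"

end

theory Submission
  imports Defs
begin

text \<open>A function g of p_1, ..., p_k is the same as the pair of its cofactors g[p_1:=0] \<le> g[p_1:=1],
  and g is monotone exactly when both cofactors are monotone and ordered. So it suffices to give
  an injective isotone map x \<mapsto> (g_x, h_x) from 2^4 into such pairs of monotone functions of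
  q, r, s (with h_x \<noteq> 0) whose 32 entries cover the 19 nonzero monotone functions of three
  variables. Attach to the four coordinates the functions u = (q, r, s, maj q r s) and choose,
  according to the set S of true coordinates of x:
  S = {}: (0, qrs);  S = {a}: (qrs, u_a);  S = {a, b}: (u_a \<and> u_b, u_a \<or> u_b);
  S = all but a: (u_a \<or> (conjunction of the other three u_b), q \<or> r \<or> s);  S = all: (q \<or> r \<or> s, 1).
  Written as positive formulas in the coordinates i, j, k, l of x these pairs become
  cofactor0 and cofactor1, which makes isotonicity evident.\<close>

definition shannon :: "(bool list \<Rightarrow> bool) \<Rightarrow> (bool list \<Rightarrow> bool) \<Rightarrow> bool list \<Rightarrow> bool" where
  "shannon g h xs = (case xs of [] \<Rightarrow> False | e # ys \<Rightarrow> if e then h ys else g ys)"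

lemma subst1_shannon [simp]: "subst1 (shannon g h) e = (if e then h else g)"
  by (simp add: subst1_def shannon_def fun_eq_iff)

lemma shannon_inject: "shannon g h = shannon g' h' \<Longrightarrow> g = g' \<and> h = h'"
  by (metis subst1_shannon)

lemma shannon_mono: "g \<le> g' \<Longrightarrow> h \<le> h' \<Longrightarrow> shannon g h \<le> shannon g' h'"
  by (auto simp: le_fun_def shannon_def split: list.split)

lemma F_monoD: "f \<in> F k \<Longrightarrow> cube_le xs ys \<Longrightarrow> length xs = k \<Longrightarrow> f xs \<Longrightarrow> f ys"
  by (auto simp: F_def monotone_bool_fun_def cube_le_def list_all2_lengthD)

lemma F_length: "f \<in> F k \<Longrightarrow> f xs \<Longrightarrow> length xs = k"
  by (auto simp: F_def monotone_bool_fun_def)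

lemma shannon_in_F:
  assumes g: "g \<in> F k" and h: "h \<in> F k" and "g \<le> h"
  shows "shannon g h \<in> F (Suc k)"
  unfolding F_def monotone_bool_fun_def mem_Collect_eq
proof (intro conjI allI impI)
  fix xs :: "bool list"
  assume "length xs \<noteq> Suc k"
  then show "\<not> shannon g h xs"
    using F_length[OF g] F_length[OF h] by (auto simp: shannon_def split: list.split)
next
  fix xs ys :: "bool list"
  assume "length xs = Suc k" "length ys = Suc k" "cube_le xs ys" "shannon g h xs"
  then obtain a xs' b ys' where xs: "xs = a # xs'" "length xs' = k" and ys: "ys = b # ys'"
    and "a \<le> b" and le: "cube_le xs' ys'"
    by (cases xs; cases ys) (auto simp: cube_le_def)
  show "shannon g h ys"
  proof (cases a)
    case True
    with \<open>a \<le> b\<close> \<open>shannon g h xs\<close> show ?thesis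
      using F_monoD[OF h le] by (simp add: xs ys shannon_def)
  next
    case False
    then have "g ys'"
      using \<open>shannon g h xs\<close> F_monoD[OF g le] by (simp add: xs shannon_def)
    then show ?thesis
      using \<open>g \<le> h\<close> by (auto simp: ys shannon_def le_fun_def)
  qed
qed

lemma shannon_in_Fminus:
  assumes "g \<in> F k" and "h \<in> Fminus k" and "g \<le> h"
  shows "shannon g h \<in> Fminus (Suc k)"
proof -
  have "shannon g h \<noteq> (\<lambda>_. False)"
    using assms(2) subst1_shannon[of g h True] by (auto simp: Fminus_def subst1_def)
  with assms show ?thesis
    by (simp add: Fminus_def shannon_in_F)
qed

definition mono3 :: "(bool \<Rightarrow> bool \<Rightarrow> bool \<Rightarrow> bool) \<Rightarrow> bool" where
  "mono3 T \<longleftrightarrow> (\<forall>q r s q' r' s'. q \<le> q' \<longrightarrow> r \<le> r' \<longrightarrow> s \<le> s' \<longrightarrow> T q r s \<longrightarrow> T q' r' s')"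

definition bfun3 :: "(bool \<Rightarrow> bool \<Rightarrow> bool \<Rightarrow> bool) \<Rightarrow> bool list \<Rightarrow> bool" where
  "bfun3 T xs \<longleftrightarrow> length xs = 3 \<and> T (xs ! 0) (xs ! 1) (xs ! 2)"

lemma length_eq_3_iff: "length xs = 3 \<longleftrightarrow> (\<exists>q r s. xs = [q, r, s])"
  by (auto simp: numeral_eq_Suc length_Suc_conv)

lemma bfun3_in_F: "mono3 T \<Longrightarrow> bfun3 T \<in> F 3"
  by (auto simp: F_def monotone_bool_fun_def bfun3_def mono3_def cube_le_def length_eq_3_iff)

lemma bfun3_le: "(\<And>q r s. T q r s \<Longrightarrow> T' q r s) \<Longrightarrow> bfun3 T \<le> bfun3 T'"
  by (auto simp: le_fun_def bfun3_def)

lemma bfun3_inject: "bfun3 T = bfun3 T' \<Longrightarrow> T = T'"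
  by (auto simp: fun_eq_iff bfun3_def dest: spec[of _ "[_, _, _]"])

lemma bfun3_in_Fminus:
  assumes "mono3 T" and "T True True True"
  shows "bfun3 T \<in> Fminus 3"
proof -
  have "bfun3 T [True, True, True]"
    using assms(2) by (simp add: bfun3_def)
  then show ?thesis
    using bfun3_in_F[OF assms(1)] by (auto simp: Fminus_def)
qed

lemma Fminus_3_bfun3E:
  assumes "f \<in> Fminus 3"
  obtains T where "mono3 T" and "T True True True" and "f = bfun3 T"
proof
  have f: "f \<in> F 3" and "f \<noteq> (\<lambda>_. False)"
    using assms by (auto simp: Fminus_def)
  show "mono3 (\<lambda>q r s. f [q, r, s])"
    unfolding mono3_def
  proof (intro allI impI)
    fix q r s q' r' s' :: bool
    assume "q \<le> q'" "r \<le> r'" "s \<le> s'" "f [q, r, s]"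
    then show "f [q', r', s']"
      using F_monoD[OF f, of "[q, r, s]" "[q', r', s']"] by (simp add: cube_le_def)
  qed
  show "f = bfun3 (\<lambda>q r s. f [q, r, s])"
  proof
    fix xs
    show "f xs = bfun3 (\<lambda>q r s. f [q, r, s]) xs"
      using F_length[OF f, of xs] by (cases "length xs = 3") (auto simp: bfun3_def length_eq_3_iff)
  qed
  obtain xs where "f xs"
    using \<open>f \<noteq> (\<lambda>_. False)\<close> by auto
  then obtain q r s where "f [q, r, s]"
    using F_length[OF f] length_eq_3_iff by metis
  then show "f [True, True, True]"
    using F_monoD[OF f, of "[q, r, s]" "[True, True, True]"] by (simp add: cube_le_def)
qed

definition maj :: "bool \<Rightarrow> bool \<Rightarrow> bool \<Rightarrow> bool" where
  "maj q r s \<longleftrightarrow> q \<and> r \<or> q \<and> s \<or> r \<and> s"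

definition cofactor0 :: "bool \<Rightarrow> bool \<Rightarrow> bool \<Rightarrow> bool \<Rightarrow> bool \<Rightarrow> bool \<Rightarrow> bool \<Rightarrow> bool" where
  "cofactor0 i j k l q r s \<longleftrightarrow>
     (i \<or> j \<or> k \<or> l) \<and> q \<and> r \<and> s
   \<or> i \<and> j \<and> q \<and> r \<or> i \<and> k \<and> q \<and> s \<or> j \<and> k \<and> r \<and> s
   \<or> i \<and> l \<and> q \<and> maj q r s \<or> j \<and> l \<and> r \<and> maj q r s \<or> k \<and> l \<and> s \<and> maj q r s
   \<or> i \<and> j \<and> k \<and> maj q r s \<or> j \<and> k \<and> l \<and> q \<or> i \<and> k \<and> l \<and> r \<or> i \<and> j \<and> l \<and> s"

definition cofactor1 :: "bool \<Rightarrow> bool \<Rightarrow> bool \<Rightarrow> bool \<Rightarrow> bool \<Rightarrow> bool \<Rightarrow> bool \<Rightarrow> bool" where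
  "cofactor1 i j k l q r s \<longleftrightarrow>
     q \<and> r \<and> s \<or> i \<and> q \<or> j \<and> r \<or> k \<and> s \<or> l \<and> maj q r s
   \<or> (i \<and> j \<and> k \<or> i \<and> j \<and> l \<or> i \<and> k \<and> l \<or> j \<and> k \<and> l) \<and> (q \<or> r \<or> s)
   \<or> i \<and> j \<and> k \<and> l"

lemma cofactor0_mono:
  "i \<le> i' \<Longrightarrow> j \<le> j' \<Longrightarrow> k \<le> k' \<Longrightarrow> l \<le> l' \<Longrightarrow> q \<le> q' \<Longrightarrow> r \<le> r' \<Longrightarrow> s \<le> s' \<Longrightarrow>
   cofactor0 i j k l q r s \<Longrightarrow> cofactor0 i' j' k' l' q' r' s'"
  by (cases i'; cases j'; cases k'; cases l'; cases q'; cases r'; cases s')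
     (simp_all add: cofactor0_def maj_def le_bool_def)

lemma cofactor1_mono:
  "i \<le> i' \<Longrightarrow> j \<le> j' \<Longrightarrow> k \<le> k' \<Longrightarrow> l \<le> l' \<Longrightarrow> q \<le> q' \<Longrightarrow> r \<le> r' \<Longrightarrow> s \<le> s' \<Longrightarrow>
   cofactor1 i j k l q r s \<Longrightarrow> cofactor1 i' j' k' l' q' r' s'"
  by (cases i'; cases j'; cases k'; cases l'; cases q'; cases r'; cases s')
     (simp_all add: cofactor1_def maj_def le_bool_def)

lemma cofactor1_top: "cofactor1 i j k l True True True"
  by (simp add: cofactor1_def)

lemma cofactor0_le_cofactor1: "cofactor0 i j k l q r s \<Longrightarrow> cofactor1 i j k l q r s"
  by (cases i; cases j; cases k; cases l; cases q; cases r; cases s)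
     (simp_all add: cofactor0_def cofactor1_def maj_def)

lemma mono3_cofactor0: "mono3 (cofactor0 i j k l)"
  unfolding mono3_def using cofactor0_mono[OF order_refl order_refl order_refl order_refl] by blast

lemma mono3_cofactor1: "mono3 (cofactor1 i j k l)"
  unfolding mono3_def using cofactor1_mono[OF order_refl order_refl order_refl order_refl] by blast

lemma cofactors_inject:
  assumes "cofactor0 i j k l = cofactor0 i' j' k' l'" and "cofactor1 i j k l = cofactor1 i' j' k' l'"
  shows "i = i' \<and> j = j' \<and> k = k' \<and> l = l'"
  using assms
  by (cases i; cases j; cases k; cases l; cases i'; cases j'; cases k'; cases l')
     (simp_all add: cofactor0_def cofactor1_def maj_def fun_eq_iff all_bool_eq)

lemma cofactors_cover:
  assumes "mono3 T" and "T True True True"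
  shows "\<exists>i j k l. T = cofactor0 i j k l \<or> T = cofactor1 i j k l"
proof -
  have up: "T (q \<or> q') (r \<or> r') (s \<or> s')" if "T q r s" for q r s q' r' s'
    by (rule assms(1)[unfolded mono3_def, rule_format, where q = q and r = r and s = s])
       (simp_all add: that)
  note ups = up[of False False False, simplified] up[of True False False, simplified]
    up[of False True False, simplified] up[of False False True, simplified]
    up[of True True False, simplified] up[of True False True, simplified]
    up[of False True True, simplified]
  \<comment> \<open>T is fixed by its values at the seven points below the top; the tables that violate
    monotonicity are refuted by \<open>ups\<close>.\<close>
  show ?thesis
    unfolding ex_bool_eq fun_eq_iff all_bool_eq
    by (cases "T False False False"; cases "T True False False"; cases "T False True False";
        cases "T False False True"; cases "T True True False"; cases "T True False True";
        cases "T False True True")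
       (simp_all add: assms(2) ups cofactor0_def cofactor1_def maj_def)
qed

definition phi :: "bool list \<Rightarrow> bool list \<Rightarrow> bool" where
  "phi x = shannon (bfun3 (cofactor0 (x ! 0) (x ! 1) (x ! 2) (x ! 3)))
                   (bfun3 (cofactor1 (x ! 0) (x ! 1) (x ! 2) (x ! 3)))"

lemma phi_Cons4: "phi [i, j, k, l] = shannon (bfun3 (cofactor0 i j k l)) (bfun3 (cofactor1 i j k l))"
  by (simp add: phi_def)

lemma cube_4_iff: "x \<in> cube 4 \<longleftrightarrow> (\<exists>i j k l. x = [i, j, k, l])"
  by (auto simp: cube_def numeral_eq_Suc length_Suc_conv)

lemma phi_in_Fminus: "phi x \<in> Fminus 4"
proof -
  have "phi x \<in> Fminus (Suc 3)"
    unfolding phi_def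
    by (intro shannon_in_Fminus bfun3_in_F bfun3_in_Fminus bfun3_le mono3_cofactor0
        mono3_cofactor1 cofactor1_top) (rule cofactor0_le_cofactor1)
  then show ?thesis
    by simp
qed

lemma phi_mono:
  assumes "x \<in> cube 4" and "cube_le x y"
  shows "phi x \<le> phi y"
proof -
  obtain i j k l where x: "x = [i, j, k, l]"
    using assms(1) cube_4_iff by blast
  then obtain i' j' k' l' where y: "y = [i', j', k', l']"
    and le: "i \<le> i'" "j \<le> j'" "k \<le> k'" "l \<le> l'"
    using assms(2) by (auto simp: cube_le_def list_all2_Cons1)
  show ?thesis
    unfolding x y phi_Cons4
    by (intro shannon_mono bfun3_le)
       (erule cofactor0_mono[OF le order_refl order_refl order_refl],
        erule cofactor1_mono[OF le order_refl order_refl order_refl])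
qed

lemma inj_on_phi: "inj_on phi (cube 4)"
proof (rule inj_onI)
  fix x y
  assume "x \<in> cube 4" "y \<in> cube 4" "phi x = phi y"
  then show "x = y"
    by (auto simp: cube_4_iff phi_Cons4 dest!: shannon_inject bfun3_inject cofactors_inject)
qed

lemma Fminus_3_subst1_phi: "f \<in> Fminus 3 \<Longrightarrow> \<exists>x\<in>cube 4. \<exists>e. f = subst1 (phi x) e"
proof -
  assume "f \<in> Fminus 3"
  then obtain T where "mono3 T" "T True True True" and f: "f = bfun3 T"
    by (rule Fminus_3_bfun3E)
  then obtain i j k l where "T = cofactor0 i j k l \<or> T = cofactor1 i j k l"
    using cofactors_cover by blast
  then have "f = subst1 (phi [i, j, k, l]) False \<or> f = subst1 (phi [i, j, k, l]) True"
    by (auto simp: f phi_Cons4)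
  then show ?thesis
    by (auto simp: cube_4_iff)
qed

theorem mainTheorem6:
  shows "\<exists>\<phi> :: bool list \<Rightarrow> (bool list \<Rightarrow> bool).
           inj_on \<phi> (cube 4) \<and>
           \<phi> ` cube 4 \<subseteq> Fminus 4 \<and>
           (\<forall>x\<in>cube 4. \<forall>y\<in>cube 4. cube_le x y \<longrightarrow> \<phi> x \<le> \<phi> y) \<and>
           Fminus 3 \<subseteq> {subst1 (\<phi> x) e | x e. x \<in> cube 4}"
proof (intro exI[of _ phi] conjI ballI impI subsetI)
  show "inj_on phi (cube 4)"
    by (rule inj_on_phi)
next
  fix g assume "g \<in> phi ` cube 4"
  then show "g \<in> Fminus 4"
    using phi_in_Fminus by blast
next
  fix x y assume "x \<in> cube 4" "cube_le x y"
  then show "phi x \<le> phi y"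
    by (rule phi_mono)
next
  fix f assume "f \<in> Fminus 3"
  then show "f \<in> {subst1 (phi x) e | x e. x \<in> cube 4}"
    using Fminus_3_subst1_phi by blast
qed

end
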